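(* Let $\mathcal{S}$ be a countably intersected family of subsets of a set $\Gamma$ and let $s_1,\dots,s_n\in\mathcal{S}$. Then there exists a pairwise disjoint family $t_1,\dots,t_l\in\mathcal{S}$ such that each $t_j$ is contained in some $s_i$ and $\bigcup_{i=1}^n s_i=\bigcup_{j=1}^l t_j$.
   Context: A family $\mathcal{S}$ of subsets of $\Gamma$ is countably intersected (C.I.) if: (a) $\mathcal{S}$ consists of countable subsets of $\Gamma$, contains all singletons, and is pointwise closed, i.e. $\{\chi_s : s\in\mathcal{S}\}$ is closed in $\{0,1\}^{\Gamma}$; (b) for all $s,t\in\mathcal{S}$, the set $s\setminus t$ is a finite union of pairwise disjoint elements of $\mathcal{S}$; (c) to every $t\in\mathcal{S}$ one can assign $s_t\in\mathcal{S}$ with $t\subseteq s_t$ such that for all $s,t_1,\dots,t_n\in\mathcal{S}$ there exists $t\in\mathcal{S}$ with $t\subseteq s\setminus\bigcup_{i=1}^n s_{t_i}$ and $s\setminus\big(\bigcup_{i=1}^n s_{t_i}\cup t\big)$ finite; (d) for every $s\in\mathcal{S}$ the set $\{s\cap t: t\in\mathcal{S}\}$ is countable. *)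

theory Defs
  imports "HOL-Analysis.Analysis"
begin

text \<open>Pointwise closedness: the set of characteristic functions (restricted to \<open>\<Gamma>\<close>)
  is closed in the product space \<open>{0,1}^\<Gamma>\<close>, with \<open>{0,1}\<close> = bool discrete.\<close>

definition countably_intersected :: "'a set \<Rightarrow> 'a set set \<Rightarrow> bool" where
  "countably_intersected \<Gamma> S \<longleftrightarrow>
     \<comment> \<open>(a)\<close>
     (\<forall>s\<in>S. s \<subseteq> \<Gamma> \<and> countable s) \<and>
     (\<forall>x\<in>\<Gamma>. {x} \<in> S) \<and>
     closedin (product_topology (\<lambda>_. discrete_topology (UNIV::bool set)) \<Gamma>)
              ((\<lambda>s. restrict (\<lambda>x. x \<in> s) \<Gamma>) ` S) \<and>
     \<comment> \<open>(b)\<close>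
     (\<forall>s\<in>S. \<forall>t\<in>S. \<exists>F. finite F \<and> F \<subseteq> S \<and> disjoint F \<and> \<Union>F = s - t) \<and>
     \<comment> \<open>(c)\<close>
     (\<exists>st :: 'a set \<Rightarrow> 'a set.
        (\<forall>t\<in>S. st t \<in> S \<and> t \<subseteq> st t) \<and>
        (\<forall>s\<in>S. \<forall>n. \<forall>ts :: nat \<Rightarrow> 'a set. (\<forall>i<n. ts i \<in> S) \<longrightarrow>
            (\<exists>t\<in>S. t \<subseteq> s - (\<Union>i<n. st (ts i)) \<and>
                    finite (s - ((\<Union>i<n. st (ts i)) \<union> t))))) \<and>
     \<comment> \<open>(d)\<close>
     (\<forall>s\<in>S. countable {s \<inter> t | t. t \<in> S})"

end

theory Submission
  imports Defs
begin

text \<open>Only axiom (b) is used. If every difference \<open>s - t\<close> of members is a finite disjoint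
  union of members, then so is \<open>s - (g\<^sub>1 \<union> \<dots> \<union> g\<^sub>m)\<close>: split each piece of
  \<open>s - (g\<^sub>1 \<union> \<dots> \<union> g\<^sub>m\<^sub>-\<^sub>1)\<close> along \<open>g\<^sub>m\<close>. A disjoint decomposition of \<open>s\<^sub>1 \<union> \<dots> \<union> s\<^sub>n\<close>
  is then built up by adding, for each \<open>k\<close>, a decomposition of \<open>s\<^sub>k\<close> minus the pieces
  chosen so far.\<close>

definition diff_decomposable :: "'a set set \<Rightarrow> bool" where
  "diff_decomposable S \<longleftrightarrow>
     (\<forall>s\<in>S. \<forall>t\<in>S. \<exists>F. finite F \<and> F \<subseteq> S \<and> disjoint F \<and> \<Union>F = s - t)"

lemma countably_intersected_diff_decomposable:
  "countably_intersected \<Gamma> S \<Longrightarrow> diff_decomposable S"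
  unfolding countably_intersected_def diff_decomposable_def by (elim conjE)

lemma disjoint_UN_refinement:
  assumes "disjoint F" and "\<And>f. f \<in> F \<Longrightarrow> disjoint (H f)" and "\<And>f. f \<in> F \<Longrightarrow> \<Union>(H f) \<subseteq> f"
  shows "disjoint (\<Union>f\<in>F. H f)"
proof (rule disjoint_UN)
  show "disjoint_family_on (\<lambda>f. \<Union>(H f)) F"
    unfolding disjoint_family_on_def
  proof (intro ballI impI)
    fix f f' assume "f \<in> F" "f' \<in> F" "f \<noteq> f'"
    then have "f \<inter> f' = {}" using \<open>disjoint F\<close> by (blast dest: disjointD)
    then show "\<Union>(H f) \<inter> \<Union>(H f') = {}" using assms(3) \<open>f \<in> F\<close> \<open>f' \<in> F\<close> by blast
  qed
qed (use assms(2) in blast)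

lemma diff_decomposable_Diff_Union:
  assumes S: "diff_decomposable S" and "finite G" "G \<subseteq> S" "s \<in> S"
  obtains F where "finite F" "F \<subseteq> S" "disjoint F" "\<Union>F = s - \<Union>G"
proof -
  have "\<exists>F. finite F \<and> F \<subseteq> S \<and> disjoint F \<and> \<Union>F = s - \<Union>G"
    using \<open>finite G\<close> \<open>G \<subseteq> S\<close>
  proof (induction G rule: finite_induct)
    case empty
    show ?case using \<open>s \<in> S\<close> by (intro exI[of _ "{s}"]) (simp add: disjoint_def)
  next
    case (insert g G)
    then obtain F where F: "finite F" "F \<subseteq> S" "disjoint F" "\<Union>F = s - \<Union>G"
      by auto
    have "\<forall>f\<in>F. \<exists>H. finite H \<and> H \<subseteq> S \<and> disjoint H \<and> \<Union>H = f - g"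
    proof
      fix f assume "f \<in> F"
      then have "f \<in> S" "g \<in> S" using \<open>F \<subseteq> S\<close> insert.prems by auto
      then show "\<exists>H. finite H \<and> H \<subseteq> S \<and> disjoint H \<and> \<Union>H = f - g"
        using S unfolding diff_decomposable_def by blast
    qed
    then obtain H where H: "\<forall>f\<in>F. finite (H f) \<and> H f \<subseteq> S \<and> disjoint (H f) \<and> \<Union>(H f) = f - g"
      by (rule bchoice[THEN exE])
    have "disjoint (\<Union>f\<in>F. H f)"
      using \<open>disjoint F\<close> H by (intro disjoint_UN_refinement) auto
    have "\<Union>(\<Union>f\<in>F. H f) = (\<Union>f\<in>F. \<Union>(H f))" by blast
    also have "\<dots> = (\<Union>f\<in>F. f - g)" using H by simp
    also have "\<dots> = s - \<Union>(insert g G)" using \<open>\<Union>F = s - \<Union>G\<close> by auto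
    finally have "\<Union>(\<Union>f\<in>F. H f) = s - \<Union>(insert g G)" .
    have "finite (\<Union>f\<in>F. H f)" using H \<open>finite F\<close> by simp
    have "(\<Union>f\<in>F. H f) \<subseteq> S" using H by blast
    show ?case by (intro exI[of _ "\<Union>f\<in>F. H f"] conjI) fact+
  qed
  then show ?thesis by (elim exE conjE) (rule that)
qed

lemma diff_decomposable_disjoint_refinement:
  assumes S: "diff_decomposable S" and "finite G" "G \<subseteq> S"
  obtains F where "finite F" "F \<subseteq> S" "disjoint F" "\<Union>F = \<Union>G" "\<forall>f\<in>F. \<exists>g\<in>G. f \<subseteq> g"
proof -
  have "\<exists>F. finite F \<and> F \<subseteq> S \<and> disjoint F \<and> \<Union>F = \<Union>G \<and> (\<forall>f\<in>F. \<exists>g\<in>G. f \<subseteq> g)"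
    using \<open>finite G\<close> \<open>G \<subseteq> S\<close>
  proof (induction G rule: finite_induct)
    case empty
    show ?case by (intro exI[of _ "{}"]) simp
  next
    case (insert g G)
    then obtain F where F: "finite F" "F \<subseteq> S" "disjoint F" "\<Union>F = \<Union>G"
        "\<forall>f\<in>F. \<exists>g\<in>G. f \<subseteq> g"
      by auto
    have "g \<in> S" using insert.prems by simp
    then obtain F' where F': "finite F'" "F' \<subseteq> S" "disjoint F'" "\<Union>F' = g - \<Union>F"
      by (rule diff_decomposable_Diff_Union[OF S \<open>finite F\<close> \<open>F \<subseteq> S\<close>])
    have "disjoint (F \<union> F')"
      using F'(4) by (intro disjoint_union[OF F(3) F'(3)]) blast
    have "\<Union>(F \<union> F') = \<Union>(insert g G)"
      using F(4) F'(4) by auto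
    have "\<forall>f\<in>F \<union> F'. \<exists>g'\<in>insert g G. f \<subseteq> g'"
      using F(5) F'(4) by blast
    have "finite (F \<union> F')" "F \<union> F' \<subseteq> S"
      using F(1,2) F'(1,2) by simp_all
    show ?case by (intro exI[of _ "F \<union> F'"] conjI) fact+
  qed
  then show ?thesis by (elim exE conjE) (rule that)
qed

lemma finite_disjoint_enumerate:
  assumes "finite F" "disjoint F"
  obtains t :: "nat \<Rightarrow> 'a set" where "t ` {..<card F} = F" "disjoint_family_on t {..<card F}"
proof -
  obtain t where t: "bij_betw t {..<card F} F"
    using ex_bij_betw_nat_finite[OF \<open>finite F\<close>] by (auto simp: atLeast0LessThan)
  then have "disjoint_family_on t {..<card F}"
    using \<open>disjoint F\<close> by (intro disjoint_image_disjoint_family_on) (auto simp: bij_betw_def)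
  then show ?thesis using t that by (auto simp: bij_betw_def)
qed

theorem lemma1p3:
  fixes \<Gamma> :: "'a set" and S :: "'a set set" and s :: "nat \<Rightarrow> 'a set" and n :: nat
  assumes "countably_intersected \<Gamma> S"
    and "\<forall>i<n. s i \<in> S"
  shows "\<exists>(l::nat) (t::nat \<Rightarrow> 'a set).
           (\<forall>j<l. t j \<in> S) \<and> disjoint_family_on t {..<l} \<and>
           (\<forall>j<l. \<exists>i<n. t j \<subseteq> s i) \<and>
           (\<Union>i<n. s i) = (\<Union>j<l. t j)"
proof -
  have "diff_decomposable S" "s ` {..<n} \<subseteq> S"
    using assms countably_intersected_diff_decomposable by auto
  then obtain F where F: "finite F" "F \<subseteq> S" "disjoint F" "\<Union>F = (\<Union>i<n. s i)"
      "\<forall>f\<in>F. \<exists>g\<in>s ` {..<n}. f \<subseteq> g"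
    by (rule diff_decomposable_disjoint_refinement[OF _ finite_imageI[OF finite_lessThan]])
  obtain t where t: "t ` {..<card F} = F" "disjoint_family_on t {..<card F}"
    using finite_disjoint_enumerate[OF \<open>finite F\<close> \<open>disjoint F\<close>] by blast
  have "\<forall>j<card F. t j \<in> S"
    using t(1) F(2) by auto
  have "\<forall>j<card F. \<exists>i<n. t j \<subseteq> s i"
  proof (intro allI impI)
    fix j assume "j < card F"
    then have "t j \<in> F" using t(1) by auto
    then show "\<exists>i<n. t j \<subseteq> s i" using F(5) by auto
  qed
  have "(\<Union>i<n. s i) = (\<Union>j<card F. t j)"
    using t(1) F(4) by simp
  show ?thesis
    by (intro exI[of _ "card F"] exI[of _ t] conjI) fact+
qed

end
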